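(* Let $X$ be a shift space, let $n\ge1$, $m\ge0$, and let $V\subseteq\mathcal L(X)$ be a finite $X$-maximal prefix code. If $\mathcal E_{\mathcal L_n(X),V}(w)$ is a tree for every $w\in\mathcal L_{\ge m}(X)$, then for every $w\in\mathcal L_{\ge m}(X)$ and every $\ell\in\mathcal L_{\ge n-1}(X)$ with $\ell w\in\mathcal L(X)$, the graph $\mathcal E_{A,V}(\ell w)$ is a tree.
   Context: $A$ is a finite alphabet; a shift space is a closed shift-invariant subset $X\subseteq A^{\mathbb Z}$; $\mathcal L(X)$ is its set of finite factors, $\mathcal L_n(X)=\mathcal L(X)\cap A^n$, $\mathcal L_{\ge n}(X)=\bigcup_{k\ge n}\mathcal L_k(X)$. A prefix code is a set of words none of which is a proper prefix of another; a prefix code $V\subseteq\mathcal L(X)$ is $X$-maximal if it is not properly contained in a prefix code contained in $\mathcal L(X)$. For $U,V\subseteq A^*$ and $w\in\mathcal L(X)$, let $L_U(w)=\{u\in U: uw\in\mathcal L(X)\}$ and $R_V(w)=\{v\in V: wv\in\mathcal L(X)\}$; the generalized extension graph $\mathcal E_{U,V}(w)$ is the undirected bipartite graph with vertex set the disjoint union of $L_U(w)$ and $R_V(w)$ and an edge $(u,v)$ iff $uwv\in\mathcal L(X)$. (Here $A$ denotes the set of one-letter words.) *)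

theory Defs
  imports "HOL-Analysis.Analysis" "HOL-Library.Sublist"
begin

definition shift :: "(int \<Rightarrow> 'a) \<Rightarrow> (int \<Rightarrow> 'a)" where
  "shift x = (\<lambda>i. x (i + 1))"

definition shift_space :: "(int \<Rightarrow> 'a::finite) set \<Rightarrow> bool" where
  "shift_space X \<longleftrightarrow>
     closedin (product_topology (\<lambda>_. discrete_topology (UNIV :: 'a set)) (UNIV :: int set)) X
     \<and> shift ` X = X"

text \<open>Finite factors (the empty word included when X is nonempty).\<close>
definition lang :: "(int \<Rightarrow> 'a) set \<Rightarrow> 'a list set" where
  "lang X = {w. \<exists>x\<in>X. \<exists>i::int. w = map (\<lambda>j. x (i + int j)) [0..<length w]}"

definition lang_n :: "(int \<Rightarrow> 'a) set \<Rightarrow> nat \<Rightarrow> 'a list set" where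
  "lang_n X n = {w \<in> lang X. length w = n}"

definition lang_ge :: "(int \<Rightarrow> 'a) set \<Rightarrow> nat \<Rightarrow> 'a list set" where
  "lang_ge X n = {w \<in> lang X. n \<le> length w}"

definition letters :: "'a list set" where
  "letters = {[a] | a. True}"

definition prefix_code :: "'a list set \<Rightarrow> bool" where
  "prefix_code V \<longleftrightarrow> (\<forall>u\<in>V. \<forall>v\<in>V. \<not> strict_prefix u v)"

definition X_maximal_prefix_code :: "(int \<Rightarrow> 'a) set \<Rightarrow> 'a list set \<Rightarrow> bool" where
  "X_maximal_prefix_code X V \<longleftrightarrow> prefix_code V \<and> V \<subseteq> lang X \<and>
     \<not> (\<exists>W. prefix_code W \<and> W \<subseteq> lang X \<and> V \<subset> W)"

definition L_ext :: "(int \<Rightarrow> 'a) set \<Rightarrow> 'a list set \<Rightarrow> 'a list \<Rightarrow> 'a list set" where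
  "L_ext X U w = {u \<in> U. u @ w \<in> lang X}"

definition R_ext :: "(int \<Rightarrow> 'a) set \<Rightarrow> 'a list set \<Rightarrow> 'a list \<Rightarrow> 'a list set" where
  "R_ext X V w = {v \<in> V. w @ v \<in> lang X}"

text \<open>Generalized extension graph E_{U,V}(w): vertices Inl u (u in L_U(w)) and
  Inr v (v in R_V(w)); undirected edges {Inl u, Inr v} iff u w v in L(X).\<close>

definition ext_verts :: "(int \<Rightarrow> 'a) set \<Rightarrow> 'a list set \<Rightarrow> 'a list set \<Rightarrow> 'a list
    \<Rightarrow> ('a list + 'a list) set" where
  "ext_verts X U V w = Inl ` L_ext X U w \<union> Inr ` R_ext X V w"

definition ext_adj :: "(int \<Rightarrow> 'a) set \<Rightarrow> 'a list set \<Rightarrow> 'a list set \<Rightarrow> 'a list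
    \<Rightarrow> ('a list + 'a list) \<Rightarrow> ('a list + 'a list) \<Rightarrow> bool" where
  "ext_adj X U V w p q \<longleftrightarrow> p \<in> ext_verts X U V w \<and> q \<in> ext_verts X U V w \<and>
     (\<exists>u v. ((p = Inl u \<and> q = Inr v) \<or> (p = Inr v \<and> q = Inl u)) \<and> u @ w @ v \<in> lang X)"

definition ug_connected :: "'v set \<Rightarrow> ('v \<Rightarrow> 'v \<Rightarrow> bool) \<Rightarrow> bool" where
  "ug_connected Vs E \<longleftrightarrow> Vs \<noteq> {} \<and>
     (\<forall>p\<in>Vs. \<forall>q\<in>Vs. (\<lambda>a b. a \<in> Vs \<and> b \<in> Vs \<and> E a b)\<^sup>*\<^sup>* p q)"

definition ug_cycle :: "'v set \<Rightarrow> ('v \<Rightarrow> 'v \<Rightarrow> bool) \<Rightarrow> 'v list \<Rightarrow> bool" where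
  "ug_cycle Vs E cs \<longleftrightarrow> 3 \<le> length cs \<and> distinct cs \<and> set cs \<subseteq> Vs \<and>
     (\<forall>i < length cs - 1. E (cs ! i) (cs ! Suc i)) \<and> E (last cs) (hd cs)"

definition ug_tree :: "'v set \<Rightarrow> ('v \<Rightarrow> 'v \<Rightarrow> bool) \<Rightarrow> bool" where
  "ug_tree Vs E \<longleftrightarrow> ug_connected Vs E \<and> \<not> (\<exists>cs. ug_cycle Vs E cs)"

definition ext_graph_is_tree :: "(int \<Rightarrow> 'a) set \<Rightarrow> 'a list set \<Rightarrow> 'a list set \<Rightarrow> 'a list \<Rightarrow> bool" where
  "ext_graph_is_tree X U V w = ug_tree (ext_verts X U V w) (ext_adj X U V w)"

end

theory Submission
  imports Defs
begin

text \<open>Write \<open>l = q r\<close> with \<open>|q| = n - 1\<close>. Appending \<open>q\<close> to the left vertices embeds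
  \<open>E_{A,V}(q r w)\<close> into \<open>E_{L_n(X),V}(r w)\<close>, so the former is acyclic. Keeping only the last
  letter of the left vertices maps \<open>E_{L_n(X),V}(l w)\<close> homomorphically onto \<open>E_{A,V}(l w)\<close>;
  it is onto because every factor extends to the left, so the latter is connected.\<close>

lemma map_upt_eq_iff_nth:
  "w = map f [0..<length w] \<longleftrightarrow> (\<forall>k < length w. w ! k = f k)"
  by (metis length_map length_upt minus_nat.diff_0 nth_equalityI nth_map_upt plus_nat.add_0)

lemma lang_iff_nth:
  "w \<in> lang X \<longleftrightarrow> (\<exists>x\<in>X. \<exists>i. \<forall>k < length w. w ! k = x (i + int k))"
  unfolding lang_def mem_Collect_eq map_upt_eq_iff_nth ..

lemma lang_sublist:
  assumes "sublist s w" "w \<in> lang X"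
  shows "s \<in> lang X"
proof -
  obtain p r where w: "w = p @ s @ r" using assms(1) by (auto simp: sublist_def)
  obtain x i where "x \<in> X" and x: "\<forall>k < length w. w ! k = x (i + int k)"
    using assms(2) by (auto simp: lang_iff_nth)
  have "s ! k = x (i + int (length p) + int k)" if "k < length s" for k
    using x[rule_format, of "length p + k"] that by (simp add: w nth_append add.assoc)
  thus ?thesis using \<open>x \<in> X\<close> by (auto simp: lang_iff_nth)
qed

lemma lang_append_left: "u @ z \<in> lang X \<Longrightarrow> u \<in> lang X"
  by (rule lang_sublist[of u "u @ z"]) auto

lemma lang_append_right: "u @ z \<in> lang X \<Longrightarrow> z \<in> lang X"
  by (rule lang_sublist[of z "u @ z"]) auto

lemma lang_extend_left:
  assumes "z \<in> lang X"
  obtains u where "length u = k" "u @ z \<in> lang X"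
proof -
  obtain x i where "x \<in> X" and x: "\<forall>j < length z. z ! j = x (i + int j)"
    using assms by (auto simp: lang_iff_nth)
  define u where "u = map (\<lambda>j. x (i - int k + int j)) [0..<k]"
  have "(u @ z) ! j = x (i - int k + int j)" if "j < length (u @ z)" for j
    using that x[rule_format, of "j - k"] by (auto simp: u_def nth_append algebra_simps)
  hence "u @ z \<in> lang X" using \<open>x \<in> X\<close> by (auto simp: lang_iff_nth)
  moreover have "length u = k" by (simp add: u_def)
  ultimately show thesis using that by blast
qed

definition ug_acyclic :: "'v set \<Rightarrow> ('v \<Rightarrow> 'v \<Rightarrow> bool) \<Rightarrow> bool" where
  "ug_acyclic Vs E \<longleftrightarrow> \<not> (\<exists>cs. ug_cycle Vs E cs)"

lemma ug_tree_iff: "ug_tree Vs E \<longleftrightarrow> ug_connected Vs E \<and> ug_acyclic Vs E"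
  by (simp add: ug_tree_def ug_acyclic_def)

lemma rtranclp_restricted_hom:
  assumes "(\<lambda>a b. a \<in> V2 \<and> b \<in> V2 \<and> E2 a b)\<^sup>*\<^sup>* p q" "f ` V2 \<subseteq> V1"
    and "\<And>a b. a \<in> V2 \<Longrightarrow> b \<in> V2 \<Longrightarrow> E2 a b \<Longrightarrow> E1 (f a) (f b)"
  shows "(\<lambda>a b. a \<in> V1 \<and> b \<in> V1 \<and> E1 a b)\<^sup>*\<^sup>* (f p) (f q)"
  using assms(1)
proof (induction rule: rtranclp_induct)
  case (step y z)
  hence "(\<lambda>a b. a \<in> V1 \<and> b \<in> V1 \<and> E1 a b) (f y) (f z)" using assms(2,3) by blast
  with step.IH show ?case by (rule rtranclp.rtrancl_into_rtrancl)
qed simp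

lemma ug_connected_hom_image:
  assumes "ug_connected V2 E2" "f ` V2 = V1"
    and "\<And>a b. a \<in> V2 \<Longrightarrow> b \<in> V2 \<Longrightarrow> E2 a b \<Longrightarrow> E1 (f a) (f b)"
  shows "ug_connected V1 E1"
  unfolding ug_connected_def
proof (intro conjI ballI)
  show "V1 \<noteq> {}" using assms(1,2) by (auto simp: ug_connected_def)
next
  fix p q assume "p \<in> V1" "q \<in> V1"
  then obtain p' q' where "p' \<in> V2" "q' \<in> V2" "p = f p'" "q = f q'" using assms(2) by blast
  thus "(\<lambda>a b. a \<in> V1 \<and> b \<in> V1 \<and> E1 a b)\<^sup>*\<^sup>* p q"
    using assms rtranclp_restricted_hom[of V2 E2 p' q' f V1 E1] by (auto simp: ug_connected_def)
qed

lemma ug_cycle_inj_hom: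
  assumes "ug_cycle V1 E1 cs" "inj_on f V1" "f ` V1 \<subseteq> V2"
    and "\<And>a b. a \<in> V1 \<Longrightarrow> b \<in> V1 \<Longrightarrow> E1 a b \<Longrightarrow> E2 (f a) (f b)"
  shows "ug_cycle V2 E2 (map f cs)"
proof -
  have "cs \<noteq> []" and cs: "set cs \<subseteq> V1" using assms(1) by (auto simp: ug_cycle_def)
  have "E2 (f (cs ! i)) (f (cs ! Suc i))" if "i < length cs - 1" for i
  proof -
    have "cs ! i \<in> V1" "cs ! Suc i \<in> V1" using cs that by auto
    thus ?thesis using assms(1,4) that by (auto simp: ug_cycle_def)
  qed
  moreover have "E2 (f (last cs)) (f (hd cs))"
  proof -
    have "last cs \<in> V1" "hd cs \<in> V1" using cs \<open>cs \<noteq> []\<close> by auto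
    thus ?thesis using assms(1,4) by (auto simp: ug_cycle_def)
  qed
  moreover have "distinct (map f cs)"
    using assms(1,2) cs by (auto simp: ug_cycle_def distinct_map inj_on_subset)
  ultimately show ?thesis
    using assms(1,3) cs \<open>cs \<noteq> []\<close> by (auto simp: ug_cycle_def last_map hd_map)
qed

lemma ug_acyclic_inj_hom:
  assumes "ug_acyclic V2 E2" "inj_on f V1" "f ` V1 \<subseteq> V2"
    and "\<And>a b. a \<in> V1 \<Longrightarrow> b \<in> V1 \<Longrightarrow> E1 a b \<Longrightarrow> E2 (f a) (f b)"
  shows "ug_acyclic V1 E1"
  using assms ug_cycle_inj_hom[of V1 E1 _ f V2 E2] by (auto simp: ug_acyclic_def)

lemma ext_graph_letters:
  "ext_verts X letters V w = ext_verts X (lang_n X 1) V w"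
  "ext_adj X letters V w = ext_adj X (lang_n X 1) V w"
proof -
  have "u \<in> letters \<longleftrightarrow> u \<in> lang_n X 1" if "u @ w \<in> lang X" for u
    using lang_append_left[OF that] by (auto simp: letters_def lang_n_def length_Suc_conv)
  hence "L_ext X letters w = L_ext X (lang_n X 1) w" by (auto simp: L_ext_def)
  thus "ext_verts X letters V w = ext_verts X (lang_n X 1) V w" by (simp add: ext_verts_def)
  thus "ext_adj X letters V w = ext_adj X (lang_n X 1) V w" by (simp add: ext_adj_def fun_eq_iff)
qed

lemma ext_graph_acyclic_shift_context:
  assumes "ug_acyclic (ext_verts X (lang_n X (k + length q)) V z)
                      (ext_adj X (lang_n X (k + length q)) V z)"
  shows "ug_acyclic (ext_verts X (lang_n X k) V (q @ z)) (ext_adj X (lang_n X k) V (q @ z))"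
proof -
  define f :: "'a list + 'a list \<Rightarrow> 'a list + 'a list"
    where "f = case_sum (\<lambda>u. Inl (u @ q)) Inr"
  have verts: "f ` ext_verts X (lang_n X k) V (q @ z) \<subseteq> ext_verts X (lang_n X (k + length q)) V z"
    using lang_append_right[of q] lang_append_left[of "_ @ q" z]
    by (force simp: f_def ext_verts_def L_ext_def R_ext_def lang_n_def)
  show ?thesis
  proof (rule ug_acyclic_inj_hom[OF assms _ verts])
    show "inj_on f (ext_verts X (lang_n X k) V (q @ z))"
      by (auto simp: inj_on_def f_def split: sum.splits)
  next
    fix a b assume "a \<in> ext_verts X (lang_n X k) V (q @ z)" "b \<in> ext_verts X (lang_n X k) V (q @ z)"
      and "ext_adj X (lang_n X k) V (q @ z) a b"
    thus "ext_adj X (lang_n X (k + length q)) V z (f a) (f b)"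
      using verts unfolding ext_adj_def by (auto simp: f_def)
  qed
qed

lemma ext_graph_connected_shorten_left:
  assumes "k \<le> n" "ug_connected (ext_verts X (lang_n X n) V z) (ext_adj X (lang_n X n) V z)"
  shows "ug_connected (ext_verts X (lang_n X k) V z) (ext_adj X (lang_n X k) V z)"
proof -
  define g :: "'a list + 'a list \<Rightarrow> 'a list + 'a list"
    where "g = case_sum (\<lambda>u. Inl (drop (n - k) u)) Inr"
  have drop_ext: "drop (n - k) u @ y \<in> lang X" if "u @ y \<in> lang X" for u y
    using lang_append_right[of "take (n - k) u" "drop (n - k) u @ y" X] that
    by (metis append.assoc append_take_drop_id)
  have onto: "ext_verts X (lang_n X k) V z \<subseteq> g ` ext_verts X (lang_n X n) V z"
  proof
    fix p assume p: "p \<in> ext_verts X (lang_n X k) V z"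
    show "p \<in> g ` ext_verts X (lang_n X n) V z"
    proof (cases p)
      case (Inl u)
      with p have u: "length u = k" "u @ z \<in> lang X"
        by (auto simp: ext_verts_def L_ext_def lang_n_def)
      then obtain u' where u': "length u' = n - k" "u' @ u @ z \<in> lang X"
        using lang_extend_left by blast
      moreover have "u' @ u \<in> lang X" using u' lang_append_left[of "u' @ u" z] by simp
      ultimately have "Inl (u' @ u) \<in> ext_verts X (lang_n X n) V z"
        using u assms(1) by (auto simp: ext_verts_def L_ext_def lang_n_def)
      moreover have "g (Inl (u' @ u)) = p" using Inl u' by (simp add: g_def)
      ultimately show ?thesis by (metis image_eqI)
    next
      case (Inr v)
      with p have "p \<in> ext_verts X (lang_n X n) V z" "g p = p"
        by (auto simp: g_def ext_verts_def)
      thus ?thesis by (metis image_eqI)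
    qed
  qed
  have "drop (n - k) u \<in> lang_n X k" "drop (n - k) u @ z \<in> lang X"
    if "u \<in> lang_n X n" "u @ z \<in> lang X" for u
    using that assms(1) drop_ext[OF that(2)] lang_append_left[OF drop_ext[OF that(2)]]
    by (auto simp: lang_n_def)
  hence "g ` ext_verts X (lang_n X n) V z \<subseteq> ext_verts X (lang_n X k) V z"
    by (auto simp: g_def ext_verts_def L_ext_def R_ext_def)
  with onto have verts: "g ` ext_verts X (lang_n X n) V z = ext_verts X (lang_n X k) V z"
    by blast
  show ?thesis
  proof (rule ug_connected_hom_image[OF assms(2) verts])
    fix a b assume "a \<in> ext_verts X (lang_n X n) V z" "b \<in> ext_verts X (lang_n X n) V z"
      and "ext_adj X (lang_n X n) V z a b"
    thus "ext_adj X (lang_n X k) V z (g a) (g b)"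
      using verts drop_ext unfolding ext_adj_def by (fastforce simp: g_def)
  qed
qed

theorem mainTheorem15:
  fixes X :: "(int \<Rightarrow> 'a::finite) set" and V :: "'a list set" and n m :: nat
  assumes "shift_space X"
    and "n \<ge> 1"
    and "finite V"
    and "X_maximal_prefix_code X V"
    and "\<forall>w \<in> lang_ge X m. ext_graph_is_tree X (lang_n X n) V w"
  shows "\<forall>w \<in> lang_ge X m. \<forall>l \<in> lang_ge X (n - 1). l @ w \<in> lang X \<longrightarrow>
           ext_graph_is_tree X letters V (l @ w)"
proof (intro ballI impI)
  fix w l assume w: "w \<in> lang_ge X m" and l: "l \<in> lang_ge X (n - 1)" and lw: "l @ w \<in> lang X"
  define q r where "q = take (n - 1) l" and "r = drop (n - 1) l"
  have l_eq: "l = q @ r" and q_len: "Suc (length q) = n"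
    using l assms(2) by (auto simp: q_def r_def lang_ge_def)
  have "r @ w \<in> lang_ge X m" "l @ w \<in> lang_ge X m"
    using w lw lang_append_right[of q "r @ w"] by (auto simp: l_eq lang_ge_def)
  hence tree_rw: "ext_graph_is_tree X (lang_n X n) V (r @ w)"
    and tree_lw: "ext_graph_is_tree X (lang_n X n) V (l @ w)" using assms(5) by auto
  have "ug_acyclic (ext_verts X (lang_n X 1) V (l @ w)) (ext_adj X (lang_n X 1) V (l @ w))"
    using ext_graph_acyclic_shift_context[of X 1 q V "r @ w"] tree_rw
    by (simp add: l_eq q_len ext_graph_is_tree_def ug_tree_iff)
  moreover have "ug_connected (ext_verts X (lang_n X 1) V (l @ w)) (ext_adj X (lang_n X 1) V (l @ w))"
    using ext_graph_connected_shorten_left[of 1 n X V "l @ w"] assms(2) tree_lw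
    unfolding ext_graph_is_tree_def ug_tree_iff by blast
  ultimately show "ext_graph_is_tree X letters V (l @ w)"
    by (simp add: ext_graph_is_tree_def ug_tree_iff ext_graph_letters)
qed

end
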